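(* Let $q=3^m$ with $m\ge1$ and $f(x)=x^{q+2}$ on $\mathbb{F}_{q^2}$. As $(a,b)$ runs through $\mathbb{F}_{q^2}\times\mathbb{F}_{q^2}^*$, the Walsh transform $W_f(a,b)$ takes the value $-q$ exactly $\frac{q^4-q^3-q^2+q}{3}$ times, the value $0$ exactly $\frac{q^4-q^3-q^2+q}{2}$ times, the value $q$ exactly $q^3-q$ times, and the value $2q$ exactly $\frac{q^4-q^3-q^2+q}{6}$ times.
   Context: For $f:\mathbb{F}_{q^2}\to\mathbb{F}_{q^2}$, the Walsh transform is $W_f(a,b)=\sum_{x\in\mathbb{F}_{q^2}}\xi_3^{\mathrm{Tr}_{\mathbb{F}_{q^2}/\mathbb{F}_3}(bf(x)-ax)}$, where $\xi_3=e^{2\pi i/3}$ and $\mathrm{Tr}_{\mathbb{F}_{q^2}/\mathbb{F}_3}$ is the absolute trace. *)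

theory Defs
  imports Complex_Main
begin

text \<open>A finite field of order 3^n is modelled as a type 'a of class field and finite
with CARD('a) = 3^n. The absolute trace to the prime field F_3 is
Tr(x) = sum_{i<n} x^(3^i).\<close>

definition abs_trace :: "nat \<Rightarrow> 'a::field \<Rightarrow> 'a" where
  "abs_trace n x = (\<Sum>i<n. x ^ (3 ^ i))"

definition prime_field_val :: "'a::field \<Rightarrow> nat" where
  "prime_field_val y = (THE k. k < 3 \<and> of_nat k = y)"

text \<open>Walsh transform W_f(a,b) = sum_x xi_3^(Tr(b f(x) - a x)), xi_3 = exp(2 pi i/3);
n is the degree of the field over F_3.\<close>
definition walsh :: "nat \<Rightarrow> ('a::{field,finite} \<Rightarrow> 'a) \<Rightarrow> 'a \<Rightarrow> 'a \<Rightarrow> complex" where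
  "walsh n f a b = (\<Sum>x\<in>UNIV.
      cis (2 * pi / 3) ^ prime_field_val (abs_trace n (b * f x - a * x)))"

end

(*
  Split F_{q^2} = F_q + D with D = {v. v^q = -v}.  After the substitution x = y / b and with a
  cube root e of c = b^-(q+1) (which lies in F_q), the trace of c (u + v)^(q+2) - a' (u + v),
  u in F_q, v in D, a' = a / b, equals the trace of u (e - c v^2 - a') - a' v.  Summing the
  character over u first leaves W(a, b) = q * sum of psi(-a' v) over the v in D with
  c v^2 = e + a' + a'^q.  There are at most two such v, namely v and -v, so W(a, b) lies in
  {-q, 0, q, 2q}, and W(a, b) = q exactly when e + a' + a'^q = 0, which happens for q values
  of a.  For fixed b the three other frequencies are then determined by the number of a, by
  sum_a W(a, b) = q^2 and by sum_a W(a, b)^2 = q^4.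
*)
theory Submission
  imports Defs "HOL-Computational_Algebra.Polynomial" "HOL-Computational_Algebra.Primes"
    "HOL-Number_Theory.Cong"
begin

lemma of_nat_card_UNIV_eq_0: "of_nat (card (UNIV :: 'a::{ring_1,finite} set)) = (0::'a)"
proof -
  have "(\<Sum>x\<in>UNIV. x) = (\<Sum>x\<in>UNIV. x + (1::'a))"
    by (rule sum.reindex_bij_witness[of _ "\<lambda>x. x + 1" "\<lambda>x. x - 1"]) auto
  then show ?thesis
    by (simp add: sum.distrib)
qed

lemma field_power_card_eq_self:
  fixes x :: "'a::{field,finite}"
  shows "x ^ card (UNIV :: 'a set) = x"
proof -
  let ?U = "UNIV - {0::'a}"
  have card: "card (UNIV :: 'a set) = Suc (card ?U)"
    using finite_UNIV_card_ge_0[where 'a = 'a] by (simp add: card_Diff_singleton)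
  show ?thesis
  proof (cases "x = 0")
    case False
    have "(\<Prod>y\<in>?U. x * y) = (\<Prod>y\<in>?U. y)"
      by (rule prod.reindex_bij_witness[of _ "\<lambda>y. y / x" "\<lambda>y. x * y"]) (use False in auto)
    then have "x ^ card ?U = 1"
      by (simp add: prod.distrib)
    then show ?thesis
      by (simp only: card power_Suc mult_1_right)
  qed (simp only: card power_Suc mult_zero_left)
qed

lemma card_power_eq_mult_le:
  fixes c :: "'a::idom"
  assumes "k \<ge> 2"
  shows "card {x. x ^ k = c * x} \<le> k"
proof -
  let ?p = "monom 1 k + [:0, - c:]"
  have "degree ?p = k"
    using assms by (subst degree_add_eq_left) (auto simp: degree_monom_eq)
  moreover from this have "?p \<noteq> 0"
    using assms by auto
  moreover have "{x. poly ?p x = 0} = {x. x ^ k = c * x}"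
    by (auto simp: poly_monom eq_neg_iff_add_eq_0 algebra_simps)
  ultimately show ?thesis
    using card_poly_roots_bound[of ?p] by simp
qed

lemma sum_additive_char_eq_0:
  fixes \<chi> :: "'a::ab_group_add \<Rightarrow> 'b::field"
  assumes hom: "\<And>x y. \<chi> (x + y) = \<chi> x * \<chi> y"
    and subgroup: "\<And>x y. x \<in> H \<Longrightarrow> y \<in> H \<Longrightarrow> x - y \<in> H"
    and "h \<in> H" "\<chi> h \<noteq> 1"
  shows "(\<Sum>x\<in>H. \<chi> x) = 0"
proof -
  have "- h \<in> H"
    using subgroup[OF subgroup[OF \<open>h \<in> H\<close> \<open>h \<in> H\<close>] \<open>h \<in> H\<close>] by simp
  then have shift: "x + h \<in> H" if "x \<in> H" for x
    using subgroup[OF that] by fastforce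
  have "(\<Sum>x\<in>H. \<chi> x) = (\<Sum>x\<in>H. \<chi> (x + h))"
    by (rule sum.reindex_bij_witness[of _ "\<lambda>x. x + h" "\<lambda>x. x - h"])
       (auto simp: shift subgroup \<open>h \<in> H\<close>)
  also have "\<dots> = \<chi> h * (\<Sum>x\<in>H. \<chi> x)"
    by (simp add: hom sum_distrib_left mult.commute)
  finally have "(1 - \<chi> h) * (\<Sum>x\<in>H. \<chi> x) = 0"
    by (simp add: algebra_simps)
  with \<open>\<chi> h \<noteq> 1\<close> show ?thesis
    by simp
qed

lemma cube_root_of_unity_add_square:
  fixes z :: "'a::idom"
  assumes "z ^ 3 = 1"
  shows "z + z ^ 2 = (if z = 1 then 2 else -1)"
proof -
  have "(z - 1) * (z + z ^ 2 + 1) = z ^ 3 - 1"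
    by (simp add: algebra_simps power2_eq_square power3_eq_cube)
  with assms show ?thesis
    by (auto simp: eq_neg_iff_add_eq_0 add.commute)
qed

lemma cis_2pi_3_cube: "cis (2 * pi / 3) ^ 3 = 1"
  by (simp add: DeMoivre)

lemma cis_2pi_3_power_neq_1: "cis (2 * pi / 3) \<noteq> 1" "cis (2 * pi / 3) ^ 2 \<noteq> 1"
proof -
  have "Re (cis (2 * pi / 3)) \<noteq> Re 1"
    by (simp add: cos_120)
  then show neq: "cis (2 * pi / 3) \<noteq> 1"
    by metis
  show "cis (2 * pi / 3) ^ 2 \<noteq> 1"
  proof
    assume "cis (2 * pi / 3) ^ 2 = 1"
    then have "cis (2 * pi / 3) ^ 3 = cis (2 * pi / 3)"
      by (simp add: power3_eq_cube power2_eq_square)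
    with neq cis_2pi_3_cube show False
      by simp
  qed
qed

lemma sum_comp_eq_sum_card_fibres:
  assumes "finite A" "finite V" "h ` A \<subseteq> V"
  shows "(\<Sum>a\<in>A. g (h a)) = (\<Sum>v\<in>V. of_nat (card {a\<in>A. h a = v}) * g v)"
proof -
  have "(\<Sum>a\<in>A. g (h a)) = (\<Sum>v\<in>V. \<Sum>a\<in>{a\<in>A. h a = v}. g (h a))"
    by (rule sum.group[OF assms, symmetric])
  also have "\<dots> = (\<Sum>v\<in>V. of_nat (card {a\<in>A. h a = v}) * g v)"
    by (intro sum.cong refl) simp
  finally show ?thesis .
qed

lemma card_pairs_const_fibres:
  fixes P :: "'a::finite \<Rightarrow> 'b::finite \<Rightarrow> bool"
  assumes "\<And>b. Q b \<Longrightarrow> real (card {a. P a b}) = r"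
  shows "real (card {(a, b). Q b \<and> P a b}) = real (card {b. Q b}) * r"
proof -
  have "{(a, b). Q b \<and> P a b} = (\<lambda>(b, a). (a, b)) ` (SIGMA b:{b. Q b}. {a. P a b})"
    by auto
  then have "card {(a, b). Q b \<and> P a b} = card (SIGMA b:{b. Q b}. {a. P a b})"
    by (simp add: card_image inj_on_def)
  also have "\<dots> = (\<Sum>b\<in>{b. Q b}. card {a. P a b})"
    by simp
  finally have "real (card {(a, b). Q b \<and> P a b}) = (\<Sum>b\<in>{b. Q b}. real (card {a. P a b}))"
    by simp
  also have "\<dots> = real (card {b. Q b}) * r"
    using assms by simp
  finally show ?thesis .
qed

definition canonical_char :: "nat \<Rightarrow> 'a::field \<Rightarrow> complex" where
  "canonical_char n x = cis (2 * pi / 3) ^ prime_field_val (abs_trace n x)"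

lemma walsh_eq_sum_canonical_char:
  "walsh n f a b = (\<Sum>x\<in>UNIV. canonical_char n (b * f x - a * x))"
  by (simp add: walsh_def canonical_char_def)

locale char3_finite_field =
  fixes n :: nat and field_type :: "'a::{field,finite} itself"
  assumes card_UNIV: "card (UNIV :: 'a set) = 3 ^ n"
begin

abbreviation Tr :: "'a \<Rightarrow> 'a" where "Tr \<equiv> abs_trace n"
abbreviation \<psi> :: "'a \<Rightarrow> complex" where "\<psi> \<equiv> canonical_char n"

lemma CHAR_eq_3: "CHAR('a) = 3"
proof -
  have "of_nat (3 ^ n) = (0::'a)"
    using of_nat_card_UNIV_eq_0[where 'a = 'a] by (simp only: card_UNIV)
  then have "CHAR('a) dvd 3 ^ n"
    by (simp only: of_nat_eq_0_iff_char_dvd)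
  moreover have "prime CHAR('a)"
    by (intro prime_CHAR_semidom finite_imp_CHAR_pos) simp
  ultimately have "CHAR('a) dvd 3"
    using prime_dvd_power by blast
  with \<open>prime CHAR('a)\<close> show ?thesis
    by (intro primes_dvd_imp_eq) simp_all
qed

lemma three_eq_0: "(3::'a) = 0"
  using of_nat_CHAR[where 'a = 'a] by (simp add: CHAR_eq_3)

lemma two_eq_minus_1: "(2::'a) = -1"
  using three_eq_0 by (simp add: eq_neg_iff_add_eq_0)

lemma two_neq_0: "(2::'a) \<noteq> 0"
  by (simp add: two_eq_minus_1)

lemma n_pos: "n > 0"
proof -
  have "card {0::'a, 1} \<le> 3 ^ n"
    unfolding card_UNIV[symmetric] by (rule card_mono) simp_all
  then show ?thesis
    by (cases n) simp_all
qed

lemma power_3_power_add: "(x + y :: 'a) ^ 3 ^ k = x ^ 3 ^ k + y ^ 3 ^ k"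
  by (rule freshmans_dream') (simp_all add: CHAR_eq_3)

lemma power_3_power_diff: "(x - y :: 'a) ^ 3 ^ k = x ^ 3 ^ k - y ^ 3 ^ k"
  using power_3_power_add[of x "- y" k] by simp

lemma power_3_power_n: "(x :: 'a) ^ 3 ^ n = x"
  using field_power_card_eq_self[of x] by (simp add: card_UNIV)

lemma cube_eq_cube_iff: "(x :: 'a) ^ 3 = y ^ 3 \<longleftrightarrow> x = y"
  using power_3_power_diff[of x y 1] by auto

lemma ex_cube_root: "\<exists>e :: 'a. e ^ 3 = c"
proof
  have "3 ^ (n - 1) * 3 = (3::nat) ^ n"
    using n_pos by (simp add: power_eq_if)
  then show "(c ^ 3 ^ (n - 1)) ^ 3 = c"
    by (simp add: power_mult[symmetric] power_3_power_n)
qed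

lemma abs_trace_add: "Tr (x + y) = Tr x + Tr y"
  by (simp add: abs_trace_def power_3_power_add sum.distrib)

lemma abs_trace_minus: "Tr (- x) = - Tr x"
  by (simp add: abs_trace_def sum_negf)

lemma abs_trace_diff: "Tr (x - y) = Tr x - Tr y"
  using abs_trace_add[of x "- y"] by (simp add: abs_trace_minus)

lemma abs_trace_cube: "Tr (x ^ 3) = Tr x"
proof -
  have "Tr (x ^ 3) = (\<Sum>i<n. x ^ 3 ^ Suc i)"
    by (simp add: abs_trace_def power_mult[symmetric] mult.commute)
  also have "\<dots> = (\<Sum>i<Suc n. x ^ 3 ^ i) - x"
    by (subst sum.lessThan_Suc_shift) simp
  also have "\<dots> = Tr x"
    by (simp add: abs_trace_def power_3_power_n)
  finally show ?thesis .
qed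

lemma abs_trace_power_3_power: "Tr (x ^ 3 ^ k) = Tr x"
proof (induction k)
  case (Suc k)
  have "x ^ 3 ^ Suc k = (x ^ 3 ^ k) ^ 3"
    by (simp add: power_mult[symmetric] mult.commute)
  with Suc show ?case
    by (simp add: abs_trace_cube)
qed simp

lemma abs_trace_cubed: "Tr x ^ 3 = Tr x"
proof -
  have "Tr x ^ 3 ^ 1 = (\<Sum>i<n. (x ^ 3 ^ i) ^ 3 ^ 1)"
    unfolding abs_trace_def by (rule freshmans_dream_sum'[where n = 1]) (simp_all add: CHAR_eq_3)
  also have "\<dots> = Tr (x ^ 3)"
    by (simp add: abs_trace_def power_mult[symmetric] mult.commute)
  finally show ?thesis
    by (simp add: abs_trace_cube)
qed

lemma abs_trace_in_prime_field: "\<exists>k. Tr x = of_nat k"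
proof -
  have "Tr x * (Tr x - 1) * (Tr x + 1) = Tr x ^ 3 - Tr x"
    by (simp add: algebra_simps power3_eq_cube)
  then have "Tr x = 0 \<or> Tr x = 1 \<or> Tr x = - 1"
    by (simp add: abs_trace_cubed eq_neg_iff_add_eq_0)
  then have "Tr x = of_nat 0 \<or> Tr x = of_nat 1 \<or> Tr x = of_nat 2"
    by (simp add: two_eq_minus_1)
  then show ?thesis
    by blast
qed

lemma ex_abs_trace_neq_0: "\<exists>x. Tr x \<noteq> 0"
proof (rule ccontr)
  let ?p = "\<Sum>i<n. monom (1::'a) (3 ^ i)"
  assume "\<not> ?thesis"
  then have "{x. poly ?p x = 0} = UNIV"
    by (simp add: abs_trace_def poly_sum poly_monom)
  moreover have "coeff ?p (3 ^ (n - 1)) = 1"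
    using n_pos by (simp add: coeff_sum)
  then have "?p \<noteq> 0"
    by auto
  ultimately have "3 ^ n \<le> degree ?p"
    using card_poly_roots_bound[of ?p] by (simp add: card_UNIV)
  moreover have "degree ?p \<le> 3 ^ (n - 1)"
    by (intro degree_sum_le) (auto simp: degree_monom_eq)
  ultimately have "3 ^ n \<le> (3::nat) ^ (n - 1)"
    by (rule le_trans)
  with n_pos show False
    by simp
qed

lemma of_nat_eq_of_nat_iff_mod_3: "(of_nat j :: 'a) = of_nat k \<longleftrightarrow> j mod 3 = k mod 3"
  by (simp add: of_nat_eq_iff_cong_CHAR CHAR_eq_3 cong_def)

lemma prime_field_val_of_nat: "prime_field_val (of_nat k :: 'a) = k mod 3"
  unfolding prime_field_val_def
  by (rule the_equality) (auto simp: of_nat_eq_of_nat_iff_mod_3)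

lemma canonical_char_eq_power:
  assumes "Tr x = of_nat k"
  shows "\<psi> x = cis (2 * pi / 3) ^ k"
proof -
  have "cis (2 * pi / 3) ^ k = (cis (2 * pi / 3) ^ 3) ^ (k div 3) * cis (2 * pi / 3) ^ (k mod 3)"
    by (simp only: power_mult[symmetric] power_add[symmetric] mult_div_mod_eq)
  then have "cis (2 * pi / 3) ^ k = cis (2 * pi / 3) ^ (k mod 3)"
    by (simp add: cis_2pi_3_cube)
  then show ?thesis
    by (simp add: canonical_char_def assms prime_field_val_of_nat)
qed

lemma canonical_char_cong: "Tr x = Tr y \<Longrightarrow> \<psi> x = \<psi> y"
  by (simp add: canonical_char_def)

lemma canonical_char_add: "\<psi> (x + y) = \<psi> x * \<psi> y"
proof -
  obtain j k where "Tr x = of_nat j" "Tr y = of_nat k"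
    using abs_trace_in_prime_field by metis
  moreover from this have "Tr (x + y) = of_nat (j + k)"
    by (simp add: abs_trace_add)
  ultimately show ?thesis
    by (simp only: canonical_char_eq_power power_add)
qed

lemma canonical_char_0: "\<psi> 0 = 1"
  using canonical_char_eq_power[of 0 0] by (simp add: abs_trace_def power_0_left)

lemma canonical_char_eq_1_iff: "\<psi> x = 1 \<longleftrightarrow> Tr x = 0"
proof -
  obtain j where "Tr x = of_nat j"
    using abs_trace_in_prime_field by blast
  then have tr: "Tr x = of_nat (j mod 3)"
    by (simp add: of_nat_eq_of_nat_iff_mod_3)
  have "j mod 3 = 0 \<or> j mod 3 = 1 \<or> j mod 3 = 2"
    by presburger
  then consider "Tr x = 0" "\<psi> x = 1" | "Tr x = 1" "\<psi> x = cis (2 * pi / 3)"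
    | "Tr x = 2" "\<psi> x = cis (2 * pi / 3) ^ 2"
    using canonical_char_eq_power[OF tr] tr by (elim disjE) simp_all
  then show ?thesis
    by cases (simp_all add: cis_2pi_3_power_neq_1 two_neq_0)
qed

lemma canonical_char_cube: "\<psi> x ^ 3 = 1"
proof -
  have "\<psi> x ^ 3 = \<psi> (x + x + x)"
    by (simp only: canonical_char_add power3_eq_cube)
  also have "x + x + x = 3 * x"
    by (simp add: algebra_simps)
  finally show ?thesis
    by (simp add: three_eq_0 canonical_char_0)
qed

lemma canonical_char_add_uminus: "\<psi> x + \<psi> (- x) = (if Tr x = 0 then 2 else -1)"
proof -
  have "- x = x + x"
    using two_eq_minus_1 by (metis mult_2 mult_minus1)
  then have "\<psi> (- x) = \<psi> x ^ 2"
    by (simp only: canonical_char_add power2_eq_square)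
  then show ?thesis
    using cube_root_of_unity_add_square[OF canonical_char_cube]
    by (simp add: canonical_char_eq_1_iff)
qed

lemma sum_canonical_char_mult:
  "(\<Sum>x\<in>UNIV. \<psi> (a * x)) = (if a = 0 then of_nat (card (UNIV :: 'a set)) else 0)"
proof (cases "a = 0")
  case False
  obtain x0 where "Tr x0 \<noteq> 0"
    using ex_abs_trace_neq_0 by blast
  with False have "\<psi> (a * (x0 / a)) \<noteq> 1"
    by (simp add: canonical_char_eq_1_iff)
  have "(\<Sum>x\<in>UNIV. \<psi> (a * x)) = 0"
    by (rule sum_additive_char_eq_0[of _ UNIV "x0 / a"])
       (simp_all only: distrib_left canonical_char_add UNIV_I not_False_eq_True
          \<open>\<psi> (a * (x0 / a)) \<noteq> 1\<close>)
  with False show ?thesis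
    by simp
qed (simp add: canonical_char_0)

lemma walsh_eq_sum_canonical_char_mult:
  fixes f :: "'a \<Rightarrow> 'a"
  shows "walsh n f a b = (\<Sum>x\<in>UNIV. \<psi> (b * f x) * \<psi> (- x * a))"
proof -
  have "b * f x - a * x = b * f x + - x * a" for x
    by (simp add: algebra_simps)
  then show ?thesis
    by (simp only: walsh_eq_sum_canonical_char canonical_char_add)
qed

lemma sum_walsh:
  fixes f :: "'a \<Rightarrow> 'a"
  shows "(\<Sum>a\<in>UNIV. walsh n f a b) = of_nat (card (UNIV :: 'a set)) * \<psi> (b * f 0)"
proof -
  have "(\<Sum>a\<in>UNIV. walsh n f a b) = (\<Sum>x\<in>UNIV. \<psi> (b * f x) * (\<Sum>a\<in>UNIV. \<psi> (- x * a)))"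
    unfolding walsh_eq_sum_canonical_char_mult sum_distrib_left by (rule sum.swap)
  also have "\<dots> = (\<Sum>x\<in>UNIV. if x = 0 then \<psi> (b * f x) * of_nat (card (UNIV :: 'a set)) else 0)"
    by (intro sum.cong refl) (simp only: sum_canonical_char_mult neg_equal_0_iff_equal, simp)
  finally show ?thesis
    by (simp add: mult.commute)
qed

lemma sum_walsh_squared:
  fixes f :: "'a \<Rightarrow> 'a"
  assumes odd: "\<And>x. f (- x) = - f x"
  shows "(\<Sum>a\<in>UNIV. walsh n f a b ^ 2) = of_nat (card (UNIV :: 'a set)) ^ 2"
proof -
  let ?P = "\<lambda>x. \<psi> (b * f x)" and ?N = "of_nat (card (UNIV :: 'a set)) :: complex"
  have "- (x + y) * a = - x * a + - y * a" for x y a :: 'a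
    by (simp add: algebra_simps)
  then have "(?P x * \<psi> (- x * a)) * (?P y * \<psi> (- y * a)) = ?P x * ?P y * \<psi> (- (x + y) * a)"
    for x y a
    by (simp only: canonical_char_add mult_ac)
  then have "(\<Sum>a\<in>UNIV. walsh n f a b ^ 2)
      = (\<Sum>a\<in>UNIV. \<Sum>x\<in>UNIV. \<Sum>y\<in>UNIV. ?P x * ?P y * \<psi> (- (x + y) * a))"
    by (simp only: power2_eq_square walsh_eq_sum_canonical_char_mult sum_product)
  also have "\<dots> = (\<Sum>x\<in>UNIV. \<Sum>y\<in>UNIV. ?P x * ?P y * (\<Sum>a\<in>UNIV. \<psi> (- (x + y) * a)))"
    unfolding sum_distrib_left by (subst sum.swap) (intro sum.cong refl sum.swap)
  also have "\<dots> = (\<Sum>x\<in>UNIV. \<Sum>y\<in>UNIV. if y = - x then ?P x * ?P y * ?N else 0)"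
    by (intro sum.cong refl) (auto simp: sum_canonical_char_mult add_eq_0_iff)
  also have "\<dots> = (\<Sum>x\<in>UNIV. ?P x * ?P (- x) * ?N)"
    by simp
  also have "\<dots> = (\<Sum>x\<in>(UNIV :: 'a set). ?N)"
    by (simp add: odd canonical_char_add[symmetric] canonical_char_0)
  finally show ?thesis
    by (simp add: power2_eq_square)
qed

end

locale gf_q_squared =
  fixes m q :: nat and field_type :: "'a::{field,finite} itself"
  assumes card_UNIV_q2: "card (UNIV :: 'a set) = q ^ 2" and q_eq: "q = 3 ^ m"

sublocale gf_q_squared \<subseteq> char3_finite_field "2 * m" field_type
  by unfold_locales (simp add: card_UNIV_q2 q_eq power_mult[symmetric] mult.commute)

context gf_q_squared
begin

text \<open>\<open>Fq\<close> is the subfield of order \<open>q\<close>, \<open>Dq\<close> the kernel of the relative trace \<open>x + x ^ q\<close>.\<close>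

abbreviation Fq :: "'a set" where "Fq \<equiv> {u. u ^ q = u}"
abbreviation Dq :: "'a set" where "Dq \<equiv> {v. v ^ q = - v}"

abbreviation Wf :: "'a \<Rightarrow> 'a \<Rightarrow> complex" where
  "Wf a b \<equiv> walsh (2 * m) (\<lambda>x. x ^ (q + 2)) a b"

lemma q_ge_3: "q \<ge> 3"
proof -
  have "(3::nat) ^ 1 \<le> 3 ^ m"
    using n_pos by (intro power_increasing) simp_all
  then show ?thesis
    by (simp add: q_eq)
qed

lemma q_odd: "odd q"
  by (simp add: q_eq)

lemma power_q_add: "(x + y :: 'a) ^ q = x ^ q + y ^ q"
  by (simp add: q_eq power_3_power_add)

lemma power_q_minus: "(- x :: 'a) ^ q = - (x ^ q)"
  by (simp add: q_eq)

lemma power_q_diff: "(x - y :: 'a) ^ q = x ^ q - y ^ q"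
  by (simp add: q_eq power_3_power_diff)

lemma power_q_power_q: "(x ^ q) ^ q = (x :: 'a)"
  using field_power_card_eq_self[of x]
  by (simp add: card_UNIV_q2 power_mult[symmetric] power2_eq_square)

lemma abs_trace_power_q: "Tr (x ^ q) = Tr x"
  by (simp add: q_eq abs_trace_power_3_power)

lemma abs_trace_Dq:
  assumes "v \<in> Dq"
  shows "Tr v = 0"
proof -
  have "Tr v = Tr (v ^ q)"
    by (rule abs_trace_power_q[symmetric])
  also have "\<dots> = - Tr v"
    using assms by (simp add: abs_trace_minus)
  finally have "2 * Tr v = 0"
    by (simp only: mult_2 eq_neg_iff_add_eq_0)
  with two_neq_0 show ?thesis
    by simp
qed

lemma Fq_times_Dq_bij: "bij_betw (\<lambda>(u, v). u + v) (Fq \<times> Dq) UNIV"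
proof (rule bij_betw_byWitness[where f' = "\<lambda>x. (- (x + x ^ q), x ^ q - x)"])
  show "\<forall>p\<in>Fq \<times> Dq. (\<lambda>x. (- (x + x ^ q), x ^ q - x)) ((\<lambda>(u, v). u + v) p) = p"
    using two_eq_minus_1 by (auto simp: power_q_add mult_2[symmetric])
  have inv: "- (x + x ^ q) + (x ^ q - x) = x" for x :: 'a
  proof -
    have "- (x + x ^ q) + (x ^ q - x) = - (2 * x)"
      by simp
    then show ?thesis
      by (simp add: two_eq_minus_1)
  qed
  show "\<forall>x\<in>(UNIV :: 'a set). (\<lambda>(u, v). u + v) ((\<lambda>x. (- (x + x ^ q), x ^ q - x)) x) = x"
    by (simp only: case_prod_conv inv ball_UNIV simp_thms)
  show "(\<lambda>x. (- (x + x ^ q), x ^ q - x)) ` UNIV \<subseteq> Fq \<times> Dq"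
    by (auto simp: power_q_minus power_q_add power_q_diff power_q_power_q)
qed simp

lemma card_Fq: "card Fq = q" and card_Dq: "card Dq = q"
proof -
  have F: "card Fq \<le> q" and D: "card Dq \<le> q"
    using card_power_eq_mult_le[of q 1] card_power_eq_mult_le[of q "- 1"] q_ge_3 by simp_all
  have prod: "card Fq * card Dq = q * q"
    using bij_betw_same_card[OF Fq_times_Dq_bij]
    by (simp add: card_cartesian_product card_UNIV_q2 power2_eq_square)
  have "card Fq * card Dq \<le> card Fq * q" "card Fq * q \<le> q * q"
    using F D by simp_all
  with prod have "card Fq * q = q * q"
    by linarith
  with q_ge_3 show "card Fq = q"
    by simp
  with prod q_ge_3 show "card Dq = q"
    by simp
qed

lemma abs_trace_mult_Fq:
  assumes "u \<in> Fq"
  shows "Tr (u * \<mu>) = - Tr (u * (\<mu> + \<mu> ^ q))"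
proof -
  have "u * \<mu> = - (u * (\<mu> + \<mu> ^ q)) + u * (\<mu> ^ q - \<mu>)"
    using two_eq_minus_1 by (simp add: algebra_simps mult_2[symmetric])
  then have "Tr (u * \<mu>) = Tr (- (u * (\<mu> + \<mu> ^ q)) + u * (\<mu> ^ q - \<mu>))"
    by (rule arg_cong)
  moreover have "u * (\<mu> ^ q - \<mu>) \<in> Dq"
    using assms by (simp add: power_mult_distrib power_q_diff power_q_power_q algebra_simps)
  ultimately show ?thesis
    by (simp only: abs_trace_add abs_trace_minus abs_trace_Dq add_0_right)
qed

lemma sum_canonical_char_Fq:
  "(\<Sum>u\<in>Fq. \<psi> (u * \<mu>)) = (if \<mu> + \<mu> ^ q = 0 then of_nat q else 0)"
proof (cases "\<mu> + \<mu> ^ q = 0")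
  case True
  then have "\<psi> (u * \<mu>) = 1" if "u \<in> Fq" for u
    using abs_trace_mult_Fq[OF that, of \<mu>] by (simp add: canonical_char_eq_1_iff abs_trace_def power_0_left)
  with True show ?thesis
    by (simp add: card_Fq)
next
  case False
  let ?r = "\<mu> + \<mu> ^ q"
  obtain x0 where x0: "Tr x0 \<noteq> 0"
    using ex_abs_trace_neq_0 by blast
  define u0 where "u0 = (x0 + x0 ^ q) / ?r"
  have r: "?r ^ q = ?r" and x0q: "(x0 + x0 ^ q) ^ q = x0 + x0 ^ q"
    by (simp_all add: power_q_add power_q_power_q add.commute)
  then have u0: "u0 \<in> Fq"
    by (simp add: u0_def power_divide)
  have "Tr (u0 * \<mu>) = - Tr (x0 + x0 ^ q)"
    using abs_trace_mult_Fq[OF u0, of \<mu>] False by (simp add: u0_def)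
  also have "\<dots> = Tr x0"
    using two_eq_minus_1 by (simp add: abs_trace_add abs_trace_power_q mult_2[symmetric])
  finally have "\<psi> (u0 * \<mu>) \<noteq> 1"
    using x0 by (simp add: canonical_char_eq_1_iff)
  then have "(\<Sum>u\<in>Fq. \<psi> (u * \<mu>)) = 0"
    using u0 by (intro sum_additive_char_eq_0[of "\<lambda>u. \<psi> (u * \<mu>)" Fq u0])
      (simp_all add: distrib_right canonical_char_add power_q_diff)
  with False show ?thesis
    by simp
qed

lemma power_q_commute: "(x ^ k) ^ q = (x ^ q) ^ k" for x :: 'a
  by (simp add: power_mult[symmetric] mult.commute)

lemma inverse_norm_in_Fq: "inverse (b ^ (q + 1)) \<in> Fq"
proof -
  have norm: "(b ^ (q + 1)) ^ q = b ^ (q + 1)"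
    by (simp add: power_mult_distrib power_q_power_q mult.commute)
  show ?thesis
    by (simp only: mem_Collect_eq power_inverse norm)
qed

lemma cube_root_in_Fq:
  assumes "e ^ 3 \<in> Fq"
  shows "e \<in> Fq"
  using assms power_q_commute[of e 3] by (simp add: cube_eq_cube_iff)

lemma walsh_rescale:
  assumes "b \<noteq> 0"
  shows "Wf a b
       = (\<Sum>y\<in>UNIV. \<psi> (inverse (b ^ (q + 1)) * y ^ (q + 2) - a / b * y))"
proof -
  have scaled:
    "inverse (b ^ (q + 1)) * (b * x) ^ (q + 2) - a / b * (b * x) = b * x ^ (q + 2) - a * x" for x
  proof -
    have "(b * x) ^ (q + 2) = b ^ (q + 1) * (b * x ^ (q + 2))"
      by (simp add: power_mult_distrib power_add power2_eq_square mult_ac)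
    moreover have "b ^ (q + 1) \<noteq> 0"
      using assms by simp
    ultimately have "inverse (b ^ (q + 1)) * (b * x) ^ (q + 2) = b * x ^ (q + 2)"
      by (simp only: mult.assoc[symmetric] left_inverse mult_1_left simp_thms)
    moreover have "a / b * (b * x) = a * x"
      using assms by simp
    ultimately show ?thesis
      by simp
  qed
  show ?thesis
    unfolding walsh_eq_sum_canonical_char
  proof (rule sum.reindex_bij_witness[of _ "\<lambda>y. y / b" "\<lambda>x. b * x"])
    show "\<psi> (inverse (b ^ (q + 1)) * (b * x) ^ (q + 2) - a / b * (b * x))
        = \<psi> (b * x ^ (q + 2) - a * x)" for x
      by (simp only: scaled)
  qed (use assms in auto)
qed

text \<open>The cube \<open>(e * u) ^ 3\<close> has the same trace as \<open>e * u\<close>, and \<open>e ^ 3 * (u ^ 2 * v - v ^ 3)\<close>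
  lies in \<open>Dq\<close>; what remains is linear in \<open>u\<close>.\<close>

lemma abs_trace_power_linear_in_Fq:
  assumes u: "u \<in> Fq" and v: "v \<in> Dq" and e: "e \<in> Fq"
  shows "Tr (e ^ 3 * (u + v) ^ (q + 2) - a * (u + v)) = Tr (u * (e - e ^ 3 * v ^ 2 - a) - a * v)"
proof -
  have "(u + v) ^ (q + 2) = (u + v) ^ q * (u + v) ^ 2"
    by (rule power_add)
  also have "(u + v) ^ q = u - v"
    using u v by (simp add: power_q_add)
  finally have pow: "(u + v) ^ (q + 2) = (u - v) * (u + v) ^ 2" .
  have expand: "e ^ 3 * (u + v) ^ (q + 2) - a * (u + v)
      = ((e * u) ^ 3 - e * u) + (u * (e - e ^ 3 * v ^ 2 - a) - a * v) + e ^ 3 * (u ^ 2 * v - v ^ 3)"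
    unfolding pow by (simp add: algebra_simps power2_eq_square power3_eq_cube)
  have "e ^ 3 * (u ^ 2 * v - v ^ 3) \<in> Dq"
    using u v e power_q_commute[of e 3] power_q_commute[of u 2] power_q_commute[of v 3]
    by (simp add: power_mult_distrib power_q_diff algebra_simps)
  then show ?thesis
    unfolding expand by (simp only: abs_trace_add abs_trace_diff abs_trace_cube abs_trace_Dq) simp
qed

lemma relative_trace_eq_0_iff:
  fixes a :: 'a
  assumes v: "v \<in> Dq" and e: "e \<in> Fq"
  defines "\<mu> \<equiv> e - e ^ 3 * v ^ 2 - a"
  shows "\<mu> + \<mu> ^ q = 0 \<longleftrightarrow> e ^ 3 * v ^ 2 = e + a + a ^ q"
proof -
  have "\<mu> ^ q = e - e ^ 3 * v ^ 2 - a ^ q"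
    using v e power_q_commute[of e 3] power_q_commute[of v 2]
    by (simp add: \<mu>_def power_q_diff power_mult_distrib)
  then have "\<mu> + \<mu> ^ q = e ^ 3 * v ^ 2 - (e + a + a ^ q) - 3 * (e ^ 3 * v ^ 2 - e)"
    by (simp add: \<mu>_def algebra_simps)
  then show ?thesis
    by (simp add: three_eq_0)
qed

lemma walsh_eq_sum_Dq:
  fixes a b :: 'a
  assumes "b \<noteq> 0" and e: "e ^ 3 = inverse (b ^ (q + 1))"
  defines "a' \<equiv> a / b"
  shows "Wf a b
       = of_nat q * (\<Sum>v\<in>{v\<in>Dq. e ^ 3 * v ^ 2 = e + a' + a' ^ q}. \<psi> (- (a' * v)))"
proof -
  let ?\<mu> = "\<lambda>v. e - e ^ 3 * v ^ 2 - a'"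
  have eF: "e \<in> Fq"
    using cube_root_in_Fq inverse_norm_in_Fq e by simp
  have "Wf a b = (\<Sum>y\<in>UNIV. \<psi> (e ^ 3 * y ^ (q + 2) - a' * y))"
    using walsh_rescale[OF assms(1)] by (simp add: e a'_def)
  also have "\<dots> = (\<Sum>(u, v)\<in>Fq \<times> Dq. \<psi> (e ^ 3 * (u + v) ^ (q + 2) - a' * (u + v)))"
    using sum.reindex_bij_betw[OF Fq_times_Dq_bij, of "\<lambda>y. \<psi> (e ^ 3 * y ^ (q + 2) - a' * y)"]
    by (simp add: case_prod_beta)
  also have "\<dots> = (\<Sum>u\<in>Fq. \<Sum>v\<in>Dq. \<psi> (u * ?\<mu> v) * \<psi> (- (a' * v)))"
    unfolding sum.cartesian_product[symmetric]
  proof (intro sum.cong refl)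
    fix u v assume "u \<in> Fq" "v \<in> Dq"
    then have "\<psi> (e ^ 3 * (u + v) ^ (q + 2) - a' * (u + v)) = \<psi> (u * ?\<mu> v - a' * v)"
      using eF by (intro canonical_char_cong abs_trace_power_linear_in_Fq)
    then show "\<psi> (e ^ 3 * (u + v) ^ (q + 2) - a' * (u + v)) = \<psi> (u * ?\<mu> v) * \<psi> (- (a' * v))"
      by (simp add: canonical_char_add[symmetric])
  qed
  also have "\<dots> = (\<Sum>v\<in>Dq. \<psi> (- (a' * v)) * (\<Sum>u\<in>Fq. \<psi> (u * ?\<mu> v)))"
    by (subst sum.swap) (simp add: sum_distrib_left mult.commute)
  also have "\<dots> = (\<Sum>v\<in>Dq. if e ^ 3 * v ^ 2 = e + a' + a' ^ q then of_nat q * \<psi> (- (a' * v)) else 0)"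
    using eF by (intro sum.cong refl) (simp add: sum_canonical_char_Fq relative_trace_eq_0_iff)
  also have "\<dots> = of_nat q * (\<Sum>v\<in>{v\<in>Dq. e ^ 3 * v ^ 2 = e + a' + a' ^ q}. \<psi> (- (a' * v)))"
    by (simp add: sum.inter_filter[symmetric] sum_distrib_left)
  finally show ?thesis .
qed

lemma sum_Dq_quadric_0:
  assumes "c \<noteq> 0"
  shows "(\<Sum>v\<in>{v\<in>Dq. c * v ^ 2 = 0}. \<psi> (- (a * v))) = 1"
proof -
  have "{v\<in>Dq. c * v ^ 2 = 0} = {0}"
    using assms q_ge_3 by (auto simp: power_0_left)
  then show ?thesis
    by (simp add: canonical_char_0)
qed

lemma sum_Dq_quadric_neq_0:
  assumes "c \<noteq> 0" "\<gamma> \<noteq> 0"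
  shows "(\<Sum>v\<in>{v\<in>Dq. c * v ^ 2 = \<gamma>}. \<psi> (- (a * v))) \<in> {0, 2, -1}"
proof (cases "{v\<in>Dq. c * v ^ 2 = \<gamma>} = {}")
  case False
  then obtain v0 where v0: "v0 \<in> Dq" "c * v0 ^ 2 = \<gamma>"
    by blast
  have "v0 \<noteq> - v0"
    using v0 assms(2) two_neq_0 by (auto simp: eq_neg_iff_add_eq_0 mult_2[symmetric])
  have "{v\<in>Dq. c * v ^ 2 = \<gamma>} = {v0, - v0}"
    using v0 assms(1) by (auto simp: power_q_minus power2_eq_iff)
  then have "(\<Sum>v\<in>{v\<in>Dq. c * v ^ 2 = \<gamma>}. \<psi> (- (a * v))) = \<psi> (a * v0) + \<psi> (- (a * v0))"
    using \<open>v0 \<noteq> - v0\<close> by (simp add: add.commute)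
  then show ?thesis
    by (simp add: canonical_char_add_uminus)
next
  case True
  then show ?thesis
    by (simp only: sum.empty) simp
qed

lemma walsh_values:
  fixes a b :: 'a
  assumes "b \<noteq> 0" and e: "e ^ 3 = inverse (b ^ (q + 1))"
  shows "Wf a b \<in> {- of_nat q, 0, of_nat q, 2 * of_nat q}"
    and "Wf a b = of_nat q \<longleftrightarrow> e + a / b + (a / b) ^ q = 0"
proof -
  let ?\<gamma> = "e + a / b + (a / b) ^ q"
  let ?G = "\<Sum>v\<in>{v\<in>Dq. e ^ 3 * v ^ 2 = ?\<gamma>}. \<psi> (- (a / b * v))"
  have W: "Wf a b = of_nat q * ?G"
    using walsh_eq_sum_Dq[OF assms] .
  have "e ^ 3 \<noteq> 0"
    using assms by (simp add: e)
  then have G0: "?G = 1" if "?\<gamma> = 0"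
    using that sum_Dq_quadric_0[OF \<open>e ^ 3 \<noteq> 0\<close>, of "a / b"] by simp
  have G1: "?G \<in> {0, 2, -1}" if "?\<gamma> \<noteq> 0"
    using that \<open>e ^ 3 \<noteq> 0\<close> by (rule sum_Dq_quadric_neq_0[rotated])
  have q: "of_nat q \<noteq> (0 :: complex)"
    using q_ge_3 by simp
  show "Wf a b \<in> {- of_nat q, 0, of_nat q, 2 * of_nat q}"
    using W G0 G1 by (cases "?\<gamma> = 0") auto
  show "Wf a b = of_nat q \<longleftrightarrow> ?\<gamma> = 0"
    using W G0 G1 q by (cases "?\<gamma> = 0") auto
qed

lemma shift_in_Dq_iff:
  assumes "e \<in> Fq"
  shows "x - e \<in> Dq \<longleftrightarrow> e + x + x ^ q = 0"
proof -
  have "(x - e) ^ q = x ^ q - e"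
    using assms by (simp add: power_q_diff)
  then have "(x - e) ^ q + (x - e) = (e + x + x ^ q) - 3 * e"
    by (simp add: algebra_simps)
  then have "(x - e) ^ q + (x - e) = e + x + x ^ q"
    by (simp add: three_eq_0)
  then show ?thesis
    by (simp only: mem_Collect_eq eq_neg_iff_add_eq_0)
qed

lemma card_walsh_eq_q:
  fixes b :: 'a
  assumes "b \<noteq> 0"
  shows "card {a. Wf a b = of_nat q} = q"
proof -
  obtain e where e: "e ^ 3 = inverse (b ^ (q + 1))"
    using ex_cube_root[of "inverse (b ^ (q + 1))"] by blast
  then have "e \<in> Fq"
    using cube_root_in_Fq inverse_norm_in_Fq by simp
  have "{a. Wf a b = of_nat q} = {a. a / b - e \<in> Dq}"
    by (simp only: walsh_values(2)[OF assms e] shift_in_Dq_iff[OF \<open>e \<in> Fq\<close>])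
  moreover have "bij_betw (\<lambda>a. a / b - e) {a. a / b - e \<in> Dq} Dq"
  proof (rule bij_betw_byWitness[where f' = "\<lambda>d. b * (d + e)"])
    show "\<forall>d\<in>Dq. b * (d + e) / b - e = d"
      and "(\<lambda>d. b * (d + e)) ` Dq \<subseteq> {a. a / b - e \<in> Dq}"
      using assms by auto
    show "\<forall>a\<in>{a. a / b - e \<in> Dq}. b * (a / b - e + e) = a"
      using assms by simp
  qed auto
  ultimately show ?thesis
    by (simp only: bij_betw_same_card card_Dq)
qed

lemma sum_comp_walsh:
  fixes b :: 'a and g :: "complex \<Rightarrow> complex"
  assumes "b \<noteq> 0"
  defines "N \<equiv> \<lambda>w. of_nat (card {a. Wf a b = w}) :: complex"
  shows "(\<Sum>a\<in>UNIV. g (Wf a b)) = N (- of_nat q) * g (- of_nat q) + N 0 * g 0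
           + of_nat q * g (of_nat q) + N (2 * of_nat q) * g (2 * of_nat q)"
proof -
  obtain e where e: "e ^ 3 = inverse (b ^ (q + 1))"
    using ex_cube_root[of "inverse (b ^ (q + 1))"] by blast
  have "(of_nat q :: complex) \<noteq> 0"
    using q_ge_3 by simp
  have "range (\<lambda>a. Wf a b) \<subseteq> {- of_nat q, 0, of_nat q, 2 * of_nat q}"
    using walsh_values(1)[OF assms(1) e] by auto
  then have "(\<Sum>a\<in>UNIV. g (Wf a b)) = (\<Sum>v\<in>{- of_nat q, 0, of_nat q, 2 * of_nat q}. N v * g v)"
    by (subst sum_comp_eq_sum_card_fibres) (simp_all add: N_def)
  also have "\<dots> = N (- of_nat q) * g (- of_nat q) + N 0 * g 0
           + of_nat q * g (of_nat q) + N (2 * of_nat q) * g (2 * of_nat q)"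
    using \<open>of_nat q \<noteq> 0\<close> card_walsh_eq_q[OF assms(1)] by (simp add: N_def add.assoc)
  finally show ?thesis .
qed

lemma walsh_count_equations:
  fixes b :: 'a
  assumes "b \<noteq> 0"
  defines "n1 \<equiv> card {a. Wf a b = - of_nat q}" and "n0 \<equiv> card {a. Wf a b = 0}"
    and "n2 \<equiv> card {a. Wf a b = 2 * of_nat q}"
  shows "q ^ 2 = n1 + n0 + q + n2" and "n1 = 2 * n2" and "q ^ 2 = n1 + q + 4 * n2"
proof -
  define Q :: complex where "Q = of_nat q"
  have "Q \<noteq> 0"
    using q_ge_3 by (simp add: Q_def)
  note moments = sum_comp_walsh[OF assms(1), folded n1_def n0_def n2_def Q_def]
  have "Q ^ 2 = of_nat n1 + of_nat n0 + Q + of_nat n2"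
    using moments[of "\<lambda>_. 1"] by (simp add: card_UNIV_q2 Q_def)
  then show "q ^ 2 = n1 + n0 + q + n2"
    unfolding Q_def by (simp only: of_nat_add[symmetric] of_nat_power[symmetric] of_nat_eq_iff)
  have "Q ^ 2 = of_nat n1 * (- Q) + Q * Q + of_nat n2 * (2 * Q)"
    using moments[of "\<lambda>w. w"] sum_walsh[of "\<lambda>x. x ^ (q + 2)" b]
    by (simp add: card_UNIV_q2 Q_def power_0_left canonical_char_0)
  then have "Q * (of_nat n1 - 2 * of_nat n2) = 0"
    by (simp add: algebra_simps power2_eq_square)
  with \<open>Q \<noteq> 0\<close> have "of_nat n1 = (of_nat (2 * n2) :: complex)"
    by simp
  then show "n1 = 2 * n2"
    by (simp only: of_nat_eq_iff)
  have "(- x) ^ (q + 2) = - (x ^ (q + 2))" for x :: 'a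
    using q_odd by simp
  then have "Q ^ 4 = of_nat n1 * Q ^ 2 + Q * Q ^ 2 + of_nat n2 * (2 * Q) ^ 2"
    using moments[of "\<lambda>w. w ^ 2"] sum_walsh_squared[of "\<lambda>x. x ^ (q + 2)" b]
    by (simp add: card_UNIV_q2 Q_def power_mult[symmetric])
  then have "Q ^ 2 * (Q ^ 2 - of_nat n1 - Q - 4 * of_nat n2) = 0"
    by (simp add: algebra_simps power2_eq_square power4_eq_xxxx)
  with \<open>Q \<noteq> 0\<close> have "Q ^ 2 - of_nat n1 - Q - 4 * of_nat n2 = 0"
    by simp
  then have "of_nat (q ^ 2) = (of_nat (n1 + q + 4 * n2) :: complex)"
    by (simp add: Q_def algebra_simps)
  then show "q ^ 2 = n1 + q + 4 * n2"
    by (simp only: of_nat_eq_iff)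
qed

lemma card_walsh_values:
  fixes b :: 'a
  assumes "b \<noteq> 0"
  shows "real (card {a. Wf a b = - of_nat q}) = (real q ^ 2 - real q) / 3"
    and "real (card {a. Wf a b = 0}) = (real q ^ 2 - real q) / 2"
    and "real (card {a. Wf a b = of_nat q}) = real q"
    and "real (card {a. Wf a b = 2 * of_nat q}) = (real q ^ 2 - real q) / 6"
proof -
  note eqs = walsh_count_equations[OF assms]
  have "3 * card {a. Wf a b = - of_nat q} + q = q ^ 2" "2 * card {a. Wf a b = 0} + q = q ^ 2"
    "6 * card {a. Wf a b = 2 * of_nat q} + q = q ^ 2"
    using eqs by linarith+
  then have "real (3 * card {a. Wf a b = - of_nat q} + q) = real (q ^ 2)"
    "real (2 * card {a. Wf a b = 0} + q) = real (q ^ 2)"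
    "real (6 * card {a. Wf a b = 2 * of_nat q} + q) = real (q ^ 2)"
    by (simp_all only:)
  then show "real (card {a. Wf a b = - of_nat q}) = (real q ^ 2 - real q) / 3"
    "real (card {a. Wf a b = 0}) = (real q ^ 2 - real q) / 2"
    "real (card {a. Wf a b = 2 * of_nat q}) = (real q ^ 2 - real q) / 6"
    by simp_all
  show "real (card {a. Wf a b = of_nat q}) = real q"
    using card_walsh_eq_q[OF assms] by simp
qed

end

theorem theorem9:
  fixes m :: nat and q :: nat and f :: "'a::{field,finite} \<Rightarrow> 'a"
  assumes f_def: "f = (\<lambda>x. x ^ (q + 2))"
    and "m \<ge> 1"
    and "q = 3 ^ m"
    and "card (UNIV :: 'a set) = q ^ 2"
  defines "W \<equiv> (\<lambda>a b. walsh (2 * m) f a b)"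
  shows "real (card {(a, b). b \<noteq> 0 \<and> W a b = - of_nat q})
           = (real q ^ 4 - real q ^ 3 - real q ^ 2 + real q) / 3
         \<and> real (card {(a, b). b \<noteq> 0 \<and> W a b = 0})
           = (real q ^ 4 - real q ^ 3 - real q ^ 2 + real q) / 2
         \<and> real (card {(a, b). b \<noteq> 0 \<and> W a b = of_nat q})
           = real q ^ 3 - real q
         \<and> real (card {(a, b). b \<noteq> 0 \<and> W a b = 2 * of_nat q})
           = (real q ^ 4 - real q ^ 3 - real q ^ 2 + real q) / 6"
proof -
  interpret gf_q_squared m q "TYPE('a)"
    using assms(3,4) by unfold_locales
  have "card {b :: 'a. b \<noteq> 0} = q ^ 2 - 1"
    by (simp add: Collect_neg_eq Compl_eq_Diff_UNIV card_Diff_singleton card_UNIV_q2)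
  then have "real (card {b :: 'a. b \<noteq> 0}) = real q ^ 2 - 1"
    using q_ge_3 by (simp add: of_nat_diff)
  then have count: "real (card {(a, b). b \<noteq> 0 \<and> W a b = w}) = (real q ^ 2 - 1) * r"
    if "\<And>b. b \<noteq> 0 \<Longrightarrow> real (card {a. W a b = w}) = r" for w r
    using card_pairs_const_fibres[of "\<lambda>b. b \<noteq> 0" "\<lambda>a b. W a b = w" r] that by simp
  have "real (card {(a, b). b \<noteq> 0 \<and> W a b = - of_nat q})
          = (real q ^ 2 - 1) * ((real q ^ 2 - real q) / 3)"
    and "real (card {(a, b). b \<noteq> 0 \<and> W a b = 0}) = (real q ^ 2 - 1) * ((real q ^ 2 - real q) / 2)"
    and "real (card {(a, b). b \<noteq> 0 \<and> W a b = of_nat q}) = (real q ^ 2 - 1) * real q"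
    and "real (card {(a, b). b \<noteq> 0 \<and> W a b = 2 * of_nat q})
          = (real q ^ 2 - 1) * ((real q ^ 2 - real q) / 6)"
    by (intro count; simp only: W_def f_def card_walsh_values simp_thms)+
  moreover have "(real q ^ 2 - 1) * (real q ^ 2 - real q)
      = real q ^ 4 - real q ^ 3 - real q ^ 2 + real q"
    and "(real q ^ 2 - 1) * real q = real q ^ 3 - real q"
    by (simp_all add: algebra_simps power2_eq_square power3_eq_cube power4_eq_xxxx)
  ultimately show ?thesis
    by (simp only: times_divide_eq_right)
qed

end
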